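(* For every parameter $(\alpha,\theta,\nu)$ where $\nu$ is a probability distribution on the positive integers and either ($0<\alpha<1$ and $\theta>-\alpha$) or ($\alpha<0$ and $\theta=-k\alpha$ for some positive integer $k$), the Hollywood process $(\mathcal{Y}_n)_{n\ge1}$ with parameter $(\alpha,\theta,\nu)$ determines an edge exchangeable probability distribution on $\mathfrak{E}_{\mathbb{N}}$.
   Context: $\mathrm{fin}(\mathcal{P})$ is the set of finite sequences of elements of $\mathcal{P}$. An interaction process $\mathcal{I}:S\to\mathrm{fin}(\mathcal{P})$ ($S\subseteq\mathbb{N}$) induces the edge-labeled network $\mathcal{E}_{\mathcal{I}}$: the equivalence class of $\mathcal{I}$ under relabeling vertices by bijections $\rho$ of the population (acting entrywise on each sequence), keeping edge labels $i\in S$. $\mathfrak{E}_S$ is the set of such networks; restriction to $S'\subseteq S$ deletes edges labeled outside $S'$. For a permutation $\sigma$ of $S$, $\mathcal{E}^\sigma$ is induced by $\mathcal{I}^\sigma(i)=\mathcal{I}(\sigma^{-1}(i))$. A random $\mathcal{Y}\in\mathfrak{E}_S$ is edge exchangeable if $\mathcal{Y}^\sigma$ has the same distribution as $\mathcal{Y}$ for every permutation $\sigma:S\to S$. Hollywood process with parameter $(\alpha,\theta,\nu)$: generate $X_1,X_2,\dots$ as follows. For each $n$, independently draw $K_n\sim\nu$; given $K_n=k$ choose $X_{n,1},\dots,X_{n,k}$ sequentially. Let $V_n(j)$ be the number of distinct labels among $X_1,\dots,X_{n-1},X_{n,1},\dots,X_{n,j-1}$ (labels are $1,2,\dots$ assigned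 in order of first appearance), and for $i\le V_n(j)$ let $D_{n,j}(i)$ be the number of occurrences of label $i$ among these. Then $\mathrm{pr}(X_{n,j}=i\mid\text{past})\propto D_{n,j}(i)-\alpha$ for $i=1,\dots,V_n(j)$ and $\propto\theta+\alpha V_n(j)$ for $i=V_n(j)+1$. Set $X_n=(X_{n,1},\dots,X_{n,K_n})$, $\mathcal{X}_n:[n]\to\mathrm{fin}(\mathbb{N})$, $\mathcal{X}_n(i)=X_i$, and $\mathcal{Y}_n=\mathcal{E}_{\mathcal{X}_n}\in\mathfrak{E}_{[n]}$. The $\mathcal{Y}_n$ are consistent under restriction and define a random element of $\mathfrak{E}_{\mathbb{N}}$. *)

theory Defs
  imports "HOL-Probability.Probability" "HOL-Combinatorics.Permutations"
begin

text \<open>Vertex labels are positive naturals 1,2,..., assigned in order of first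
appearance. The state of the process is the flat list ds of all labels drawn so
far.\<close>

definition hw_weights :: "real \<Rightarrow> real \<Rightarrow> nat list \<Rightarrow> (nat \<times> real) list" where
  "hw_weights \<alpha> \<theta> ds =
     (let V = card (set ds) in
      map (\<lambda>i. (i, real (count_list ds i) - \<alpha>)) [1..<V+1] @ [(V+1, \<theta> + \<alpha> * real V)])"

definition hw_step :: "real \<Rightarrow> real \<Rightarrow> nat list \<Rightarrow> nat pmf" where
  "hw_step \<alpha> \<theta> ds =
     (if ds = [] then return_pmf 1
      else (let w = hw_weights \<alpha> \<theta> ds; t = sum_list (map snd w) in
            pmf_of_list (map (\<lambda>(i, x). (i, x / t)) w)))"

fun hw_edge :: "real \<Rightarrow> real \<Rightarrow> nat \<Rightarrow> nat list \<Rightarrow> nat list pmf" where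
  "hw_edge \<alpha> \<theta> 0 ds = return_pmf []"
| "hw_edge \<alpha> \<theta> (Suc k) ds =
     bind_pmf (hw_step \<alpha> \<theta> ds) (\<lambda>x.
     bind_pmf (hw_edge \<alpha> \<theta> k (ds @ [x])) (\<lambda>xs. return_pmf (x # xs)))"

text \<open>Joint law of (X_1,...,X_n) (edge X_{i+1} is the i-th list entry).\<close>
fun hollywood :: "real \<Rightarrow> real \<Rightarrow> nat pmf \<Rightarrow> nat \<Rightarrow> nat list list pmf" where
  "hollywood \<alpha> \<theta> \<nu> 0 = return_pmf []"
| "hollywood \<alpha> \<theta> \<nu> (Suc n) =
     bind_pmf (hollywood \<alpha> \<theta> \<nu> n) (\<lambda>es.
     bind_pmf \<nu> (\<lambda>k.
     bind_pmf (hw_edge \<alpha> \<theta> k (concat es)) (\<lambda>e. return_pmf (es @ [e]))))"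

text \<open>Edge-labeled network induced by an interaction process (edges indexed by
positions of the list): its equivalence class under relabelling vertices by
bijections of the population.\<close>
definition network :: "nat list list \<Rightarrow> nat list list set" where
  "network es = {map (map \<rho>) es | \<rho>. bij \<rho>}"

definition hollywood_network :: "real \<Rightarrow> real \<Rightarrow> nat pmf \<Rightarrow> nat \<Rightarrow> nat list list set pmf" where
  "hollywood_network \<alpha> \<theta> \<nu> n = map_pmf network (hollywood \<alpha> \<theta> \<nu> n)"

text \<open>I^sigma(i) = I(sigma^{-1} i).\<close>
definition edge_perm :: "(nat \<Rightarrow> nat) \<Rightarrow> nat list list \<Rightarrow> nat list list" where
  "edge_perm \<sigma> es = permute_list (inv \<sigma>) es"

end

theory Submission
  imports Defs
begin

text \<open>Label the vertices in order of first appearance. On such canonically labelled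
sequences the Hollywood process is the (\<alpha>, \<theta>) Chinese restaurant process, whose
sequence probabilities depend, by Pitman's formula, only on the multiset of block sizes.
Hence an edge list of length n in the support has probability \<open>\<Prod>\<^sub>e \<nu>(|e|)\<close> times
the EPPF of its label multiset. Permuting the edges by \<sigma> and relabelling canonically
preserves both factors and is a bijection of the support (canonical edge lists of
length n), so it preserves the law; and relabelling does not change the induced network.\<close>

section \<open>Labelling in order of first appearance\<close>

definition first_label :: "'a list \<Rightarrow> 'a \<Rightarrow> nat" where
  "first_label ds y = Suc (card (set (takeWhile (\<lambda>z. z \<noteq> y) ds)))"

lemma first_label_snoc: "y \<in> set ds \<Longrightarrow> first_label (ds @ [x]) y = first_label ds y"
  by (simp add: first_label_def)

lemma first_label_snoc_new: "x \<notin> set ds \<Longrightarrow> first_label (ds @ [x]) x = Suc (card (set ds))"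
  unfolding first_label_def by (subst takeWhile_append2) auto

lemma bij_betw_first_label: "bij_betw (first_label ds) (set ds) {1..card (set ds)}"
proof (induction ds rule: rev_induct)
  case Nil
  then show ?case by (simp add: bij_betw_def)
next
  case (snoc x ds)
  have IH: "bij_betw (first_label (ds @ [x])) (set ds) {1..card (set ds)}"
    using snoc.IH by (rule bij_betw_cong[THEN iffD1, rotated]) (simp add: first_label_snoc)
  show ?case
  proof (cases "x \<in> set ds")
    case True
    then show ?thesis using IH by (simp add: insert_absorb)
  next
    case False
    then have "bij_betw (first_label (ds @ [x]))
        (set ds \<union> {x}) ({1..card (set ds)} \<union> {Suc (card (set ds))})"
      using notIn_Un_bij_betw[OF False _ IH] by (simp add: first_label_snoc_new)
    then show ?thesis using False by (simp add: atLeastAtMostSuc_conv)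
  qed
qed

lemma first_label_map:
  assumes inj: "inj_on f (set ds)" and y: "y \<in> set ds"
  shows "first_label (map f ds) (f y) = first_label ds y"
proof -
  have "takeWhile ((\<lambda>z. z \<noteq> f y) \<circ> f) ds = takeWhile (\<lambda>z. z \<noteq> y) ds"
    using inj y by (intro takeWhile_cong) (auto dest: inj_onD)
  moreover have "inj_on f (set (takeWhile (\<lambda>z. z \<noteq> y) ds))"
    using inj by (rule inj_on_subset) (auto dest: set_takeWhileD)
  ultimately show ?thesis by (simp add: first_label_def takeWhile_map card_image)
qed

definition canonical :: "nat list \<Rightarrow> bool" where
  "canonical ds \<longleftrightarrow> map (first_label ds) ds = ds"

lemma canonical_iff: "canonical ds \<longleftrightarrow> (\<forall>y\<in>set ds. first_label ds y = y)"
  using map_eq_conv[of "first_label ds" ds "\<lambda>x. x"] by (simp add: canonical_def)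

lemma canonical_set: "canonical ds \<Longrightarrow> set ds = {1..card (set ds)}"
  using bij_betw_imp_surj_on[OF bij_betw_first_label, of ds] by (simp add: canonical_iff)

lemma canonical_snoc:
  "canonical (ds @ [x]) \<longleftrightarrow> canonical ds \<and> (x \<in> set ds \<or> x = Suc (card (set ds)))"
  by (cases "x \<in> set ds") (auto simp: canonical_iff first_label_snoc first_label_snoc_new)

lemma canonical_relabel: "canonical (map (first_label ds) ds)"
  using bij_betw_imp_inj_on[OF bij_betw_first_label[of ds]]
  by (auto simp: canonical_iff first_label_map)

section \<open>Edge lists and networks\<close>

definition canon_edges :: "nat list list \<Rightarrow> nat list list" where
  "canon_edges es = map (map (first_label (concat es))) es"

lemma length_canon_edges [simp]: "length (canon_edges es) = length es"
  by (simp add: canon_edges_def)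

lemma canonical_concat_canon_edges: "canonical (concat (canon_edges es))"
  by (simp add: canon_edges_def map_concat[symmetric] canonical_relabel)

lemma canon_edges_canonical: "canonical (concat es) \<Longrightarrow> canon_edges es = es"
  by (auto simp: canon_edges_def canonical_iff intro!: map_idI)

lemma canon_edges_relabel:
  assumes "inj_on f (set (concat es))"
  shows "canon_edges (map (map f) es) = canon_edges es"
  using first_label_map[OF assms] by (auto simp: canon_edges_def map_concat[symmetric])

lemma inj_on_extend_to_bij:
  fixes f :: "'a \<Rightarrow> 'a"
  assumes fin: "finite A" and inj: "inj_on f A"
  obtains \<pi> where "bij \<pi>" and "\<And>x. x \<in> A \<Longrightarrow> \<pi> x = f x"
proof -
  define S where "S = A \<union> f ` A"
  have "finite S" using fin by (simp add: S_def)
  moreover have "card A = card (f ` A)" using inj by (simp add: card_image)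
  ultimately have "card (S - A) = card (S - f ` A)"
    by (simp add: card_Diff_subset S_def)
  then obtain u where u: "bij_betw u (S - A) (S - f ` A)"
    by (meson finite_Diff finite_same_card_bij \<open>finite S\<close>)
  define \<pi> where "\<pi> x = (if x \<in> A then f x else if x \<in> S then u x else x)" for x
  have "bij_betw \<pi> A (f ` A)"
    using inj_on_imp_bij_betw[OF inj]
    by (rule bij_betw_cong[THEN iffD1, rotated]) (simp add: \<pi>_def)
  moreover have "bij_betw \<pi> (S - A) (S - f ` A)"
    using u by (rule bij_betw_cong[THEN iffD1, rotated]) (simp add: \<pi>_def)
  ultimately have "bij_betw \<pi> (A \<union> (S - A)) (f ` A \<union> (S - f ` A))"
    by (rule bij_betw_combine) blast
  then have "\<pi> permutes S"
    by (auto simp: permutes_altdef S_def \<pi>_def Un_absorb1)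
  then show ?thesis using that permutes_bij by (fastforce simp: \<pi>_def)
qed

lemma network_map_bij:
  assumes "bij \<pi>"
  shows "network (map (map \<pi>) es) = network es"
proof (intro set_eqI iffI)
  fix xs assume "xs \<in> network (map (map \<pi>) es)"
  then obtain \<rho> where "bij \<rho>" and "xs = map (map (\<rho> \<circ> \<pi>)) es"
    by (auto simp: network_def)
  moreover have "bij (\<rho> \<circ> \<pi>)" using assms \<open>bij \<rho>\<close> by (rule bij_comp)
  ultimately show "xs \<in> network es"
    unfolding network_def by blast
next
  fix xs assume "xs \<in> network es"
  then obtain \<rho> where "bij \<rho>" and "xs = map (map \<rho>) es"
    by (auto simp: network_def)
  then have "xs = map (map (\<rho> \<circ> inv \<pi>)) (map (map \<pi>) es)"
    using assms by (simp add: o_assoc[symmetric] bij_is_inj)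
  moreover have "bij (\<rho> \<circ> inv \<pi>)"
    using assms \<open>bij \<rho>\<close> by (intro bij_comp bij_imp_bij_inv)
  ultimately show "xs \<in> network (map (map \<pi>) es)"
    unfolding network_def by blast
qed

lemma network_relabel:
  assumes "inj_on f (set (concat es))"
  shows "network (map (map f) es) = network es"
proof -
  obtain \<pi> where "bij \<pi>" and \<pi>: "\<And>x. x \<in> set (concat es) \<Longrightarrow> \<pi> x = f x"
    using inj_on_extend_to_bij[OF finite_set assms] by blast
  have "map (map f) es = map (map \<pi>) es"
    by (intro map_cong refl \<pi>[symmetric]) auto
  then show ?thesis
    by (metis network_map_bij[OF \<open>bij \<pi>\<close>])
qed

lemma network_canon_edges: "network (canon_edges es) = network es"
  unfolding canon_edges_def
  by (rule network_relabel) (rule bij_betw_imp_inj_on[OF bij_betw_first_label])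

lemma length_edge_perm [simp]: "length (edge_perm \<sigma> es) = length es"
  by (simp add: edge_perm_def)

lemma edge_perm_map:
  "\<sigma> permutes {..<length es} \<Longrightarrow> edge_perm \<sigma> (map g es) = map g (edge_perm \<sigma> es)"
  by (simp add: edge_perm_def permute_list_map permutes_inv)

lemma edge_perm_inv:
  "\<sigma> permutes {..<length es} \<Longrightarrow> edge_perm (inv \<sigma>) (edge_perm \<sigma> es) = es"
  by (simp add: edge_perm_def inv_inv_eq permutes_bij permutes_inv permute_list_compose[symmetric]
      permutes_inv_o permute_list_id)

lemma mset_map_edge_perm:
  "\<sigma> permutes {..<length es} \<Longrightarrow> mset (map g (edge_perm \<sigma> es)) = mset (map g es)"
  by (simp add: edge_perm_def permute_list_map[symmetric] permutes_inv)

lemma mset_concat_edge_perm: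
  "\<sigma> permutes {..<length es} \<Longrightarrow> mset (concat (edge_perm \<sigma> es)) = mset (concat es)"
  by (metis mset_map_edge_perm mset_concat sum_mset_sum_list)


section \<open>The law of the Hollywood process\<close>

definition hollywood_params :: "real \<Rightarrow> real \<Rightarrow> bool" where
  "hollywood_params \<alpha> \<theta> \<longleftrightarrow> (0 < \<alpha> \<and> \<alpha> < 1 \<and> \<theta> > - \<alpha>) \<or>
                 (\<alpha> < 0 \<and> (\<exists>k::nat. k > 0 \<and> \<theta> = - real k * \<alpha>))"

lemma hollywood_params_bounds: "hollywood_params \<alpha> \<theta> \<Longrightarrow> \<alpha> < 1 \<and> -1 < \<theta>"
  unfolding hollywood_params_def
proof (elim disjE conjE exE)
  fix k :: nat assume "\<alpha> < 0" "k > 0" "\<theta> = - real k * \<alpha>"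
  moreover have "real k * \<alpha> < 0" using \<open>\<alpha> < 0\<close> \<open>k > 0\<close> by (simp add: mult_pos_neg)
  ultimately show ?thesis by simp
qed simp

lemma hollywood_params_new_weight:
  assumes "hollywood_params \<alpha> \<theta>" and "V = 0 \<or> 0 < \<theta> + \<alpha> * real V"
  shows "0 \<le> \<theta> + \<alpha> * real (Suc V)"
  using assms(1) unfolding hollywood_params_def
proof (elim disjE conjE exE)
  assume "0 < \<alpha>" "- \<alpha> < \<theta>"
  moreover have "\<theta> + \<alpha> * real (Suc V) = (\<theta> + \<alpha> * real V) + \<alpha>"
    by (simp add: distrib_left)
  ultimately show ?thesis using assms(2) by auto
next
  fix k :: nat assume "\<alpha> < 0" "0 < k" and \<theta>: "\<theta> = - real k * \<alpha>"
  have "V < k"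
  proof (cases "V = 0")
    case False
    moreover have "\<theta> + \<alpha> * real V = (- \<alpha>) * (real k - real V)"
      by (simp add: \<theta> right_diff_distrib)
    ultimately have "0 < (- \<alpha>) * (real k - real V)" using assms(2) by simp
    then show ?thesis using \<open>\<alpha> < 0\<close> by (simp add: mult_less_0_iff)
  qed (use \<open>0 < k\<close> in simp)
  then have "0 \<le> (- \<alpha>) * (real k - real (Suc V))"
    using \<open>\<alpha> < 0\<close> by (intro mult_nonneg_nonneg) auto
  also have "\<dots> = \<theta> + \<alpha> * real (Suc V)"
    by (simp add: \<theta> right_diff_distrib)
  finally show ?thesis .
qed

definition step_weight :: "real \<Rightarrow> real \<Rightarrow> nat list \<Rightarrow> nat \<Rightarrow> real" where
  "step_weight \<alpha> \<theta> s x =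
    (if x \<in> set s then real (count_list s x) - \<alpha>
     else if x = Suc (card (set s)) then \<theta> + \<alpha> * real (card (set s))
     else 0)"

text \<open>For the empty history \<open>hw_step\<close> is the point mass at label 1, which the weight
formula would only give for \<open>\<theta> \<noteq> 0\<close>.\<close>

definition step_prob :: "real \<Rightarrow> real \<Rightarrow> nat list \<Rightarrow> nat \<Rightarrow> real" where
  "step_prob \<alpha> \<theta> s x =
    (if s = [] then of_bool (x = 1) else step_weight \<alpha> \<theta> s x / (real (length s) + \<theta>))"

text \<open>The invariant along sample paths. For \<open>\<alpha> < 0\<close> it says that at most \<open>\<theta> / -\<alpha>\<close>
labels have appeared, so that the weight of a new label is never negative.\<close>

definition admissible :: "real \<Rightarrow> real \<Rightarrow> nat list \<Rightarrow> bool" where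
  "admissible \<alpha> \<theta> s \<longleftrightarrow> canonical s \<and> (s \<noteq> [] \<longrightarrow> 0 \<le> \<theta> + \<alpha> * real (card (set s)))"

lemma hw_weights_canonical:
  assumes "canonical s"
  shows "hw_weights \<alpha> \<theta> s = map (\<lambda>i. (i, step_weight \<alpha> \<theta> s i)) [1..<card (set s) + 2]"
proof -
  define V where "V = card (set s)"
  have s: "set s = {1..V}" unfolding V_def using assms by (rule canonical_set)
  have "map (\<lambda>i. (i, real (count_list s i) - \<alpha>)) [1..<V + 1]
      = map (\<lambda>i. (i, step_weight \<alpha> \<theta> s i)) [1..<V + 1]"
    by (rule map_cong) (simp_all add: s step_weight_def del: upt_Suc)
  moreover have "step_weight \<alpha> \<theta> s (Suc V) = \<theta> + \<alpha> * real V"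
    by (simp add: s step_weight_def)
  moreover have "[1..<V + 2] = [1..<V + 1] @ [Suc V]"
    by simp
  ultimately show ?thesis
    by (simp add: hw_weights_def V_def[symmetric] del: upt_Suc)
qed

lemma sum_step_weight:
  assumes "canonical s"
  shows "(\<Sum>i\<leftarrow>[1..<card (set s) + 2]. step_weight \<alpha> \<theta> s i) = real (length s) + \<theta>"
proof -
  define V where "V = card (set s)"
  have s: "set s = {1..V}" unfolding V_def using assms by (rule canonical_set)
  have "(\<Sum>i\<leftarrow>[1..<V + 1]. step_weight \<alpha> \<theta> s i) = (\<Sum>i\<in>set s. real (count_list s i) - \<alpha>)"
    by (simp add: interv_sum_list_conv_sum_set_nat s atLeastLessThanSuc_atLeastAtMost
        step_weight_def del: upt_Suc)
  also have "\<dots> = real (length s) - \<alpha> * real V"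
    using sum_count_set[of s "set s"] by (simp add: sum_subtractf V_def flip: of_nat_sum)
  finally have "(\<Sum>i\<leftarrow>[1..<V + 1]. step_weight \<alpha> \<theta> s i) = real (length s) - \<alpha> * real V" .
  moreover have "step_weight \<alpha> \<theta> s (Suc V) = \<theta> + \<alpha> * real V"
    by (simp add: s step_weight_def)
  moreover have "[1..<V + 2] = [1..<V + 1] @ [Suc V]"
    by simp
  ultimately show ?thesis
    by (simp add: V_def[symmetric] del: upt_Suc)
qed

lemma step_weight_nonneg:
  assumes "\<alpha> < 1" and "admissible \<alpha> \<theta> s" and "s \<noteq> []"
  shows "0 \<le> step_weight \<alpha> \<theta> s x"
proof -
  have "1 \<le> count_list s x" if "x \<in> set s"
    using that count_list_0_iff[of s x] by linarith
  then show ?thesis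
    using assms by (auto simp: step_weight_def admissible_def)
qed

lemma pmf_pmf_of_list_distinct:
  assumes "distinct xs" and "\<And>i. i \<in> set xs \<Longrightarrow> 0 \<le> h i" and "(\<Sum>i\<leftarrow>xs. h i) = 1"
  shows "pmf (pmf_of_list (map (\<lambda>i. (i, h i)) xs)) x = (if x \<in> set xs then h x else 0)"
proof -
  have "pmf_of_list_wf (map (\<lambda>i. (i, h i)) xs)"
    using assms by (intro pmf_of_list_wfI) (auto simp: o_def)
  then have "pmf (pmf_of_list (map (\<lambda>i. (i, h i)) xs)) x = (\<Sum>i\<leftarrow>xs. if i = x then h i else 0)"
    by (simp add: pmf_pmf_of_list filter_map o_def sum_list_map_filter')
  also have "\<dots> = (if x \<in> set xs then h x else 0)"
    by (simp add: sum_list_distinct_conv_sum_set[OF assms(1)] sum.delta')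
  finally show ?thesis .
qed

lemma pmf_hw_step:
  assumes "\<alpha> < 1" and "-1 < \<theta>" and adm: "admissible \<alpha> \<theta> s"
  shows "pmf (hw_step \<alpha> \<theta> s) x = step_prob \<alpha> \<theta> s x"
proof (cases "s = []")
  case True
  then show ?thesis by (simp add: hw_step_def step_prob_def)
next
  case False
  define V where "V = card (set s)"
  define t where "t = real (length s) + \<theta>"
  have can: "canonical s" using adm by (simp add: admissible_def)
  have s: "set s = {1..V}" unfolding V_def using can by (rule canonical_set)
  have "1 \<le> length s" using False by (cases s) auto
  then have "0 < t" using \<open>-1 < \<theta>\<close> by (simp add: t_def)
  have "sum_list (map snd (hw_weights \<alpha> \<theta> s)) = t"
    using sum_step_weight[OF can]
    by (simp add: hw_weights_canonical[OF can] o_def t_def del: upt_Suc)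
  then have "hw_step \<alpha> \<theta> s = pmf_of_list (map (\<lambda>(i, w). (i, w / t)) (hw_weights \<alpha> \<theta> s))"
    using False by (simp add: hw_step_def Let_def)
  also have "\<dots> = pmf_of_list (map (\<lambda>i. (i, step_weight \<alpha> \<theta> s i / t)) [1..<V + 2])"
    by (simp add: hw_weights_canonical[OF can] V_def o_def del: upt_Suc)
  also have "pmf \<dots> x = (if x \<in> set [1..<V + 2] then step_weight \<alpha> \<theta> s x / t else 0)"
  proof (rule pmf_pmf_of_list_distinct)
    show "0 \<le> step_weight \<alpha> \<theta> s i / t" for i
      using step_weight_nonneg[OF \<open>\<alpha> < 1\<close> adm False] \<open>0 < t\<close> by simp
    show "(\<Sum>i\<leftarrow>[1..<V + 2]. step_weight \<alpha> \<theta> s i / t) = 1"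
      using sum_step_weight[OF can] \<open>0 < t\<close>
      by (simp add: divide_inverse sum_list_mult_const t_def V_def del: upt_Suc)
  qed simp
  also have "\<dots> = step_prob \<alpha> \<theta> s x"
    using False by (auto simp: s step_prob_def step_weight_def t_def V_def[symmetric])
  finally show ?thesis .
qed

fun seq_prob :: "real \<Rightarrow> real \<Rightarrow> nat list \<Rightarrow> nat list \<Rightarrow> real" where
  "seq_prob \<alpha> \<theta> s [] = 1"
| "seq_prob \<alpha> \<theta> s (x # xs) = step_prob \<alpha> \<theta> s x * seq_prob \<alpha> \<theta> (s @ [x]) xs"

lemma seq_prob_append:
  "seq_prob \<alpha> \<theta> s (xs @ ys) = seq_prob \<alpha> \<theta> s xs * seq_prob \<alpha> \<theta> (s @ xs) ys"
  by (induction xs arbitrary: s) auto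

lemma admissible_snoc:
  assumes params: "hollywood_params \<alpha> \<theta>" and adm: "admissible \<alpha> \<theta> s"
    and "step_prob \<alpha> \<theta> s x \<noteq> 0"
  shows "admissible \<alpha> \<theta> (s @ [x])"
proof (cases "s = []")
  case True
  then have "x = 1" using assms(3) by (simp add: step_prob_def)
  moreover have "0 \<le> \<theta> + \<alpha> * real (Suc 0)"
    using hollywood_params_new_weight[OF params, of 0] by simp
  ultimately show ?thesis using True by (simp add: admissible_def canonical_def first_label_def)
next
  case False
  define V where "V = card (set s)"
  have "step_weight \<alpha> \<theta> s x \<noteq> 0" using assms(3) False by (simp add: step_prob_def)
  then consider "x \<in> set s" | "x \<notin> set s" "x = Suc V" "\<theta> + \<alpha> * real V \<noteq> 0"
    by (auto simp: step_weight_def V_def split: if_splits)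
  then show ?thesis
  proof cases
    case 1
    then show ?thesis using adm False by (simp add: admissible_def canonical_snoc insert_absorb)
  next
    case 2
    moreover have "0 \<le> \<theta> + \<alpha> * real V" using adm False by (simp add: admissible_def V_def)
    ultimately have "0 \<le> \<theta> + \<alpha> * real (Suc V)"
      by (intro hollywood_params_new_weight[OF params]) auto
    then show ?thesis using 2 adm by (simp add: admissible_def canonical_snoc V_def)
  qed
qed

lemma admissible_if_seq_prob_nonzero:
  assumes "hollywood_params \<alpha> \<theta>"
  shows "seq_prob \<alpha> \<theta> [] ds \<noteq> 0 \<Longrightarrow> admissible \<alpha> \<theta> ds"
proof (induction ds rule: rev_induct)
  case Nil
  then show ?case by (simp add: admissible_def canonical_def)
next
  case (snoc x xs)
  then show ?case using admissible_snoc[OF assms] by (simp add: seq_prob_append)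
qed

lemma pmf_bind_eq_single:
  assumes "\<And>a. a \<in> set_pmf A \<Longrightarrow> a \<noteq> a0 \<Longrightarrow> pmf (f a) z = 0"
  shows "pmf (bind_pmf A f) z = pmf A a0 * pmf (f a0) z"
proof -
  have "pmf (bind_pmf A f) z = (\<integral>a. pmf (f a) z \<partial>measure_pmf A)"
    by (rule pmf_bind)
  also have "\<dots> = (\<Sum>a\<in>{a0}. pmf (f a) z * pmf A a)"
    by (rule integral_measure_pmf_real) (use assms in auto)
  finally show ?thesis by simp
qed

lemma length_of_set_pmf_hw_edge: "xs \<in> set_pmf (hw_edge \<alpha> \<theta> k s) \<Longrightarrow> length xs = k"
  by (induction k arbitrary: s xs) auto

lemma pmf_hw_edge:
  assumes params: "hollywood_params \<alpha> \<theta>"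
  shows "admissible \<alpha> \<theta> s \<Longrightarrow> length xs = k \<Longrightarrow>
    pmf (hw_edge \<alpha> \<theta> k s) xs = seq_prob \<alpha> \<theta> s xs"
proof (induction k arbitrary: s xs)
  case 0
  then show ?case by simp
next
  case (Suc k)
  then obtain y ys where xs: "xs = y # ys" and "length ys = k" by (cases xs) auto
  have "hw_edge \<alpha> \<theta> (Suc k) s
      = bind_pmf (hw_step \<alpha> \<theta> s) (\<lambda>x. map_pmf ((#) x) (hw_edge \<alpha> \<theta> k (s @ [x])))"
    by (simp add: map_pmf_def)
  then have "pmf (hw_edge \<alpha> \<theta> (Suc k) s) xs
      = pmf (hw_step \<alpha> \<theta> s) y * pmf (map_pmf ((#) y) (hw_edge \<alpha> \<theta> k (s @ [y]))) xs"
    by (simp only:) (rule pmf_bind_eq_single, auto simp: xs pmf_eq_0_set_pmf)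
  also have "\<dots> = step_prob \<alpha> \<theta> s y * pmf (hw_edge \<alpha> \<theta> k (s @ [y])) ys"
    using hollywood_params_bounds[OF params] Suc.prems(1)
    by (simp add: pmf_hw_step xs pmf_map_inj')
  also have "\<dots> = seq_prob \<alpha> \<theta> s xs"
  proof (cases "step_prob \<alpha> \<theta> s y = 0")
    case False
    then have "admissible \<alpha> \<theta> (s @ [y])" by (rule admissible_snoc[OF params Suc.prems(1)])
    then show ?thesis using Suc.IH \<open>length ys = k\<close> by (simp add: xs)
  qed (simp add: xs)
  finally show ?case .
qed

lemma length_of_set_pmf_hollywood: "es \<in> set_pmf (hollywood \<alpha> \<theta> \<nu> n) \<Longrightarrow> length es = n"
  by (induction n arbitrary: es) auto

lemma pmf_hollywood:
  assumes params: "hollywood_params \<alpha> \<theta>"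
  shows "length es = n \<Longrightarrow>
    pmf (hollywood \<alpha> \<theta> \<nu> n) es = (\<Prod>e\<leftarrow>es. pmf \<nu> (length e)) * seq_prob \<alpha> \<theta> [] (concat es)"
proof (induction n arbitrary: es)
  case 0
  then show ?case by simp
next
  case (Suc n)
  then obtain es' e where es: "es = es' @ [e]" and "length es' = n"
    by (cases es rule: rev_exhaust) auto
  define edge where "edge k = map_pmf (\<lambda>e. es' @ [e]) (hw_edge \<alpha> \<theta> k (concat es'))" for k
  have "hollywood \<alpha> \<theta> \<nu> (Suc n) = bind_pmf (hollywood \<alpha> \<theta> \<nu> n) (\<lambda>es0. bind_pmf \<nu> (\<lambda>k.
       map_pmf (\<lambda>e. es0 @ [e]) (hw_edge \<alpha> \<theta> k (concat es0))))"
    by (simp add: map_pmf_def)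
  then have "pmf (hollywood \<alpha> \<theta> \<nu> (Suc n)) es
      = pmf (hollywood \<alpha> \<theta> \<nu> n) es' * pmf (bind_pmf \<nu> edge) es"
    unfolding edge_def by (simp only:) (rule pmf_bind_eq_single, auto simp: es pmf_eq_0_set_pmf)
  also have "pmf (bind_pmf \<nu> edge) es = pmf \<nu> (length e) * pmf (edge (length e)) es"
    by (rule pmf_bind_eq_single)
      (auto simp: es edge_def pmf_eq_0_set_pmf dest: length_of_set_pmf_hw_edge)
  also have "pmf (edge (length e)) es = pmf (hw_edge \<alpha> \<theta> (length e) (concat es')) e"
    unfolding edge_def es by (rule pmf_map_inj') (simp add: inj_def)
  also have "pmf (hollywood \<alpha> \<theta> \<nu> n) es' * (pmf \<nu> (length e) * \<dots>)
      = (\<Prod>e\<leftarrow>es. pmf \<nu> (length e)) * seq_prob \<alpha> \<theta> [] (concat es)"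
  proof (cases "seq_prob \<alpha> \<theta> [] (concat es') = 0")
    case True
    then show ?thesis using Suc.IH \<open>length es' = n\<close> by (simp add: es seq_prob_append)
  next
    case False
    then have "admissible \<alpha> \<theta> (concat es')" by (rule admissible_if_seq_prob_nonzero[OF params])
    then show ?thesis using Suc.IH \<open>length es' = n\<close>
      by (simp add: es seq_prob_append pmf_hw_edge[OF params])
  qed
  finally show ?case .
qed

lemma canonical_of_set_pmf_hollywood:
  assumes "hollywood_params \<alpha> \<theta>" and "es \<in> set_pmf (hollywood \<alpha> \<theta> \<nu> n)"
  shows "canonical (concat es)"
proof -
  have "seq_prob \<alpha> \<theta> [] (concat es) \<noteq> 0"
    using assms length_of_set_pmf_hollywood[OF assms(2)] by (auto simp: pmf_hollywood set_pmf_iff)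
  then show ?thesis
    using admissible_if_seq_prob_nonzero[OF assms(1)] by (simp add: admissible_def)
qed


section \<open>Pitman's formula\<close>

text \<open>Pitman's exchangeable partition probability function of the (\<alpha>, \<theta>) Chinese
restaurant process, evaluated at the block sizes \<open>count M i\<close>.\<close>

definition eppf :: "real \<Rightarrow> real \<Rightarrow> nat multiset \<Rightarrow> real" where
  "eppf \<alpha> \<theta> M =
    (\<Prod>j\<in>{1..<card (set_mset M)}. \<theta> + real j * \<alpha>) *
    (\<Prod>i\<in>set_mset M. \<Prod>m\<in>{1..<count M i}. real m - \<alpha>) /
    (\<Prod>m\<in>{1..<size M}. \<theta> + real m)"

lemma prod_set_mset_add_mset:
  "(\<Prod>i\<in>set_mset (add_mset x M). g (count (add_mset x M) i))
     = g (Suc (count M x)) * (\<Prod>i\<in>set_mset M - {x}. g (count M i))"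
proof -
  have "(\<Prod>i\<in>set_mset (add_mset x M). g (count (add_mset x M) i))
      = g (Suc (count M x)) * (\<Prod>i\<in>set_mset M - {x}. g (count (add_mset x M) i))"
    by (simp add: prod.insert_remove)
  also have "(\<Prod>i\<in>set_mset M - {x}. g (count (add_mset x M) i))
      = (\<Prod>i\<in>set_mset M - {x}. g (count M i))"
    by (rule prod.cong) auto
  finally show ?thesis .
qed

lemma eppf_add_mset:
  assumes "-1 < \<theta>" and "M \<noteq> {#}"
  shows "eppf \<alpha> \<theta> (add_mset x M) = eppf \<alpha> \<theta> M *
    (if x \<in># M then real (count M x) - \<alpha> else \<theta> + \<alpha> * real (card (set_mset M))) /
    (real (size M) + \<theta>)"
proof -
  define g where "g c = (\<Prod>m\<in>{1..<c}. real m - \<alpha>)" for c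
  define A where "A V = (\<Prod>j\<in>{1..<V}. \<theta> + real j * \<alpha>)" for V
  define D where "D L = (\<Prod>m\<in>{1..<L}. \<theta> + real m)" for L
  define R where "R = (\<Prod>i\<in>set_mset M - {x}. g (count M i))"
  have eppf: "eppf \<alpha> \<theta> N = A (card (set_mset N)) * (\<Prod>i\<in>set_mset N. g (count N i)) / D (size N)"
    for N
    by (simp add: eppf_def A_def D_def g_def)
  have "1 \<le> size M" and "1 \<le> card (set_mset M)"
    using assms(2) by (auto simp: Suc_le_eq nonempty_has_size card_gt_0_iff)
  have "0 < D (size M)" unfolding D_def using assms(1) by (intro prod_pos) auto
  moreover have "D (size (add_mset x M)) = D (size M) * (\<theta> + real (size M))"
    unfolding D_def size_add_mset using \<open>1 \<le> size M\<close> by (rule prod.atLeastLessThan_Suc)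
  moreover have "0 < \<theta> + real (size M)" using assms(1) \<open>1 \<le> size M\<close> by linarith
  moreover have "A (card (set_mset (add_mset x M))) *
        (\<Prod>i\<in>set_mset (add_mset x M). g (count (add_mset x M) i))
      = A (card (set_mset M)) * (\<Prod>i\<in>set_mset M. g (count M i)) *
        (if x \<in># M then real (count M x) - \<alpha> else \<theta> + \<alpha> * real (card (set_mset M)))"
  proof (cases "x \<in># M")
    case True
    have "g (Suc (count M x)) = g (count M x) * (real (count M x) - \<alpha>)"
      unfolding g_def using True by (intro prod.atLeastLessThan_Suc) (simp add: Suc_le_eq)
    moreover have "(\<Prod>i\<in>set_mset M. g (count M i)) = g (count M x) * R"
      using True by (simp add: R_def prod.remove)
    ultimately show ?thesis
      using True unfolding prod_set_mset_add_mset R_def[symmetric]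
      by (simp add: insert_absorb mult_ac)
  next
    case False
    have "A (Suc (card (set_mset M)))
        = A (card (set_mset M)) * (\<theta> + \<alpha> * real (card (set_mset M)))"
      unfolding A_def using \<open>1 \<le> card (set_mset M)\<close>
      by (subst prod.atLeastLessThan_Suc) (simp_all add: mult.commute)
    moreover have "(\<Prod>i\<in>set_mset M. g (count M i)) = R"
      using False by (simp add: R_def)
    ultimately show ?thesis
      using False unfolding prod_set_mset_add_mset R_def[symmetric]
      by (simp add: g_def mult_ac)
  qed
  ultimately show ?thesis
    unfolding eppf by (simp add: field_simps)
qed

lemma seq_prob_canonical:
  assumes "-1 < \<theta>"
  shows "canonical ds \<Longrightarrow> seq_prob \<alpha> \<theta> [] ds = eppf \<alpha> \<theta> (mset ds)"
proof (induction ds rule: rev_induct)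
  case Nil
  then show ?case by (simp add: eppf_def)
next
  case (snoc x xs)
  then have can: "canonical xs" and x: "x \<in> set xs \<or> x = Suc (card (set xs))"
    by (auto simp: canonical_snoc)
  have "seq_prob \<alpha> \<theta> [] (xs @ [x]) = eppf \<alpha> \<theta> (mset xs) * step_prob \<alpha> \<theta> xs x"
    by (simp add: seq_prob_append snoc.IH[OF can])
  also have "\<dots> = eppf \<alpha> \<theta> (mset (xs @ [x]))"
  proof (cases "xs = []")
    case True
    then show ?thesis using x by (simp add: eppf_def step_prob_def)
  next
    case False
    then show ?thesis using x assms
      by (auto simp: eppf_add_mset step_prob_def step_weight_def count_mset
          add.commute[of _ "{#x#}"])
  qed
  finally show ?case .
qed

lemma eppf_image_mset:
  assumes inj: "inj_on f (set_mset M)"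
  shows "eppf \<alpha> \<theta> (image_mset f M) = eppf \<alpha> \<theta> M"
proof -
  have "count (image_mset f M) (f i) = count M i" if "i \<in># M" for i
  proof -
    have "f -` {f i} \<inter> set_mset M = {i}" using inj that by (auto dest: inj_onD)
    then show ?thesis by (simp add: count_image_mset)
  qed
  then have "(\<Prod>i\<in>set_mset (image_mset f M). \<Prod>m\<in>{1..<count (image_mset f M) i}. real m - \<alpha>)
         = (\<Prod>i\<in>set_mset M. \<Prod>m\<in>{1..<count M i}. real m - \<alpha>)"
    using inj by (simp add: prod.reindex)
  moreover have "card (set_mset (image_mset f M)) = card (set_mset M)"
    using inj by (simp add: card_image)
  ultimately show ?thesis by (simp add: eppf_def)
qed


section \<open>Invariance under edge permutations\<close>

lemma pmf_hollywood_canonical: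
  assumes "hollywood_params \<alpha> \<theta>" and "length es = n" and "canonical (concat es)"
  shows "pmf (hollywood \<alpha> \<theta> \<nu> n) es
    = (\<Prod>e\<leftarrow>es. pmf \<nu> (length e)) * eppf \<alpha> \<theta> (mset (concat es))"
  using assms hollywood_params_bounds[OF assms(1)] by (simp add: pmf_hollywood seq_prob_canonical)

definition canon_edge_perm :: "(nat \<Rightarrow> nat) \<Rightarrow> nat list list \<Rightarrow> nat list list" where
  "canon_edge_perm \<sigma> es = canon_edges (edge_perm \<sigma> es)"

lemma canon_edge_perm_inv:
  assumes \<sigma>: "\<sigma> permutes {..<length es}" and "canonical (concat es)"
  shows "canon_edge_perm (inv \<sigma>) (canon_edge_perm \<sigma> es) = es"
proof -
  define f where "f = first_label (concat (edge_perm \<sigma> es))"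
  have "set (concat (edge_perm \<sigma> es)) = set (concat es)"
    by (metis mset_concat_edge_perm[OF \<sigma>] set_mset_mset)
  then have inj: "inj_on f (set (concat es))"
    using bij_betw_imp_inj_on[OF bij_betw_first_label] by (metis f_def)
  have "edge_perm (inv \<sigma>) (canon_edge_perm \<sigma> es)
      = map (map f) (edge_perm (inv \<sigma>) (edge_perm \<sigma> es))"
    using \<sigma> by (simp add: canon_edge_perm_def canon_edges_def f_def edge_perm_map permutes_inv)
  also have "\<dots> = map (map f) es"
    by (simp add: edge_perm_inv \<sigma>)
  finally show ?thesis
    using assms(2)
    by (simp add: canon_edge_perm_def canon_edges_relabel[OF inj] canon_edges_canonical)
qed

lemma bij_betw_canon_edge_perm:
  assumes "\<sigma> permutes {..<n}"
  shows "bij_betw (canon_edge_perm \<sigma>)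
           {es. length es = n \<and> canonical (concat es)} {es. length es = n \<and> canonical (concat es)}"
    (is "bij_betw _ ?C ?C")
proof (rule bij_betw_byWitness[where f' = "canon_edge_perm (inv \<sigma>)"])
  have "inv (inv \<sigma>) = \<sigma>" using assms by (simp add: inv_inv_eq permutes_bij)
  then show "\<forall>es\<in>?C. canon_edge_perm \<sigma> (canon_edge_perm (inv \<sigma>) es) = es"
    using canon_edge_perm_inv[of "inv \<sigma>"] permutes_inv[OF assms] by auto
  show "\<forall>es\<in>?C. canon_edge_perm (inv \<sigma>) (canon_edge_perm \<sigma> es) = es"
    using canon_edge_perm_inv[of \<sigma>] assms by auto
qed (auto simp: canon_edge_perm_def canonical_concat_canon_edges)

lemma pmf_hollywood_canon_edge_perm:
  assumes params: "hollywood_params \<alpha> \<theta>" and \<sigma>: "\<sigma> permutes {..<n}"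
    and "length es = n" and "canonical (concat es)"
  shows "pmf (hollywood \<alpha> \<theta> \<nu> n) (canon_edge_perm \<sigma> es) = pmf (hollywood \<alpha> \<theta> \<nu> n) es"
proof -
  define f where "f = first_label (concat (edge_perm \<sigma> es))"
  have \<sigma>': "\<sigma> permutes {..<length es}" using \<sigma> assms(3) by simp
  have es': "canon_edge_perm \<sigma> es = map (map f) (edge_perm \<sigma> es)"
    by (simp add: canon_edge_perm_def canon_edges_def f_def)
  have "(\<Prod>e\<leftarrow>canon_edge_perm \<sigma> es. pmf \<nu> (length e))
      = (\<Prod>e\<leftarrow>edge_perm \<sigma> es. pmf \<nu> (length e))"
    by (simp add: es' o_def)
  also have "\<dots> = (\<Prod>e\<leftarrow>es. pmf \<nu> (length e))"
    by (metis mset_map_edge_perm[OF \<sigma>'] prod_mset_prod_list)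
  finally have "(\<Prod>e\<leftarrow>canon_edge_perm \<sigma> es. pmf \<nu> (length e)) = (\<Prod>e\<leftarrow>es. pmf \<nu> (length e))" .
  moreover have "eppf \<alpha> \<theta> (mset (concat (canon_edge_perm \<sigma> es))) = eppf \<alpha> \<theta> (mset (concat es))"
  proof -
    have inj: "inj_on f (set_mset (mset (concat (edge_perm \<sigma> es))))"
      unfolding set_mset_mset f_def by (rule bij_betw_imp_inj_on[OF bij_betw_first_label])
    have "eppf \<alpha> \<theta> (mset (concat (canon_edge_perm \<sigma> es)))
        = eppf \<alpha> \<theta> (image_mset f (mset (concat (edge_perm \<sigma> es))))"
      by (simp add: es' map_concat[symmetric])
    also have "\<dots> = eppf \<alpha> \<theta> (mset (concat (edge_perm \<sigma> es)))"
      by (rule eppf_image_mset[OF inj])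
    also have "\<dots> = eppf \<alpha> \<theta> (mset (concat es))"
      by (simp only: mset_concat_edge_perm[OF \<sigma>'])
    finally show ?thesis .
  qed
  moreover have "length (canon_edge_perm \<sigma> es) = n" and "canonical (concat (canon_edge_perm \<sigma> es))"
    using assms(3) by (simp_all add: canon_edge_perm_def canonical_concat_canon_edges)
  ultimately show ?thesis
    using assms by (simp add: pmf_hollywood_canonical)
qed

lemma map_pmf_eq_self_if_bij_betw:
  assumes bij: "bij_betw h C C" and supp: "set_pmf p \<subseteq> C"
    and inv: "\<And>x. x \<in> C \<Longrightarrow> pmf p (h x) = pmf p x"
  shows "map_pmf h p = p"
proof (rule pmf_eqI)
  fix x
  have inj: "inj_on h (set_pmf p)"
    using bij_betw_imp_inj_on[OF bij] supp by (rule inj_on_subset)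
  show "pmf (map_pmf h p) x = pmf p x"
  proof (cases "x \<in> C")
    case True
    then obtain y where "y \<in> C" and x: "x = h y"
      using bij_betw_imp_surj_on[OF bij] by blast
    show ?thesis
    proof (cases "y \<in> set_pmf p")
      case True
      then show ?thesis using inj inv[OF \<open>y \<in> C\<close>] by (simp add: x pmf_map_inj)
    next
      case False
      then have "x \<notin> h ` set_pmf p"
        using bij_betw_imp_inj_on[OF bij] supp \<open>y \<in> C\<close> by (auto simp: x inj_on_def)
      moreover have "pmf p x = 0"
        using False inv[OF \<open>y \<in> C\<close>] by (simp add: x set_pmf_iff)
      ultimately show ?thesis by (metis pmf_eq_0_set_pmf set_map_pmf)
    qed
  next
    case False
    then have "x \<notin> h ` set_pmf p" and "x \<notin> set_pmf p"
      using bij_betw_imp_surj_on[OF bij] supp by auto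
    then show ?thesis by (metis pmf_eq_0_set_pmf set_map_pmf)
  qed
qed

lemma map_pmf_canon_edge_perm_hollywood:
  assumes "hollywood_params \<alpha> \<theta>" and "\<sigma> permutes {..<n}"
  shows "map_pmf (canon_edge_perm \<sigma>) (hollywood \<alpha> \<theta> \<nu> n) = hollywood \<alpha> \<theta> \<nu> n"
  by (rule map_pmf_eq_self_if_bij_betw[OF bij_betw_canon_edge_perm[OF assms(2)]])
    (auto simp: pmf_hollywood_canon_edge_perm[OF assms] length_of_set_pmf_hollywood
      canonical_of_set_pmf_hollywood[OF assms(1)])

theorem theorem5p1:
  fixes \<alpha> \<theta> :: real and \<nu> :: "nat pmf"
  assumes nu_pos: "0 \<notin> set_pmf \<nu>"
    and params: "(0 < \<alpha> \<and> \<alpha> < 1 \<and> \<theta> > - \<alpha>) \<or>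
                 (\<alpha> < 0 \<and> (\<exists>k::nat. k > 0 \<and> \<theta> = - real k * \<alpha>))"
  shows "\<forall>n. \<forall>\<sigma>. \<sigma> permutes {..<n} \<longrightarrow>
           map_pmf (\<lambda>es. network (edge_perm \<sigma> es)) (hollywood \<alpha> \<theta> \<nu> n)
             = hollywood_network \<alpha> \<theta> \<nu> n"
proof (intro allI impI)
  fix n :: nat and \<sigma> :: "nat \<Rightarrow> nat"
  assume \<sigma>: "\<sigma> permutes {..<n}"
  have "hollywood_params \<alpha> \<theta>" using params by (simp add: hollywood_params_def)
  have "(\<lambda>es. network (edge_perm \<sigma> es)) = network \<circ> canon_edge_perm \<sigma>"
    by (simp add: fun_eq_iff canon_edge_perm_def network_canon_edges)
  then show "map_pmf (\<lambda>es. network (edge_perm \<sigma> es)) (hollywood \<alpha> \<theta> \<nu> n)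
      = hollywood_network \<alpha> \<theta> \<nu> n"
    by (simp add: hollywood_network_def map_pmf_compose
        map_pmf_canon_edge_perm_hollywood[OF \<open>hollywood_params \<alpha> \<theta>\<close> \<sigma>])
qed

end
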